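(* Let $X$ be a compact Hausdorff space, $Y$ a normed linear space over $\mathbb{R}$ with norm $\|\cdot\|$, and $C(X,Y)$ the space of continuous functions $X\to Y$ equipped with the uniform norm $|||f||| = \max_{x\in X}\|f(x)\|$. Let $H\subset C(X,Y)$ be a linear subspace of finite dimension $n\ge 1$. Let $A$ be a compact Hausdorff topological space and $\{f_a\}_{a\in A}\subset C(X,Y)$ a family such that the map $A\to C(X,Y)$, $a\mapsto f_a$, is continuous (with respect to the uniform norm). Then $f^*\in H$ is a best simultaneous approximation to $\{f_a\}_{a\in A}$ from $H$, i.e. $$\max_{a\in A}|||f_a-f^*|||\le \max_{a\in A}|||f_a-f|||\quad\text{for all } f\in H,$$ if and only if there exist an integer $k$ with $1\le k\le n+1$, elements $a_1,\dots,a_k\in A$, points $x_1,\dots,x_k\in X$, and positive numbers $\lambda_1,\dots,\lambda_k$ with $\sum_{i=1}^k\lambda_i=1$ such that (i) $\sum_{i=1}^k\lambda_i\|f_{a_i}(x_i)-f^*(x_i)\|\le \sum_{i=1}^k\lambda_i\|f_{a_i}(x_i)-f(x_i)\|$ for all $f\in H$; and (ii) $\|f_{a_i}(x_i)-f^*(x_i)\| = |||f_{a_i}-f^*||| = \max_{a\in A}|||f_a-f^*|||$ for all $i$ with $1\le i\le k$. *)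

theory Defs
  imports "HOL-Analysis.Analysis"
begin

end

theory Submission
  imports Defs
begin

(* Fix a basis b_1, ..., b_n of H and, for t = (a, x) in A x X, put
   U_t(v) = |f_a(x) - f*(x) - sum_j v_j b_j(x)| - E,  where E = max_a |||f_a - f*|||.
   The family U is jointly continuous in (t, v) over the compact index space A x X, and each U_t is
   convex and Lipschitz in v.  If f* is a best approximation then max_t U_t(v) >= 0 = max_t U_t(0),
   and 0 is a convex combination of subgradients at 0 of active U_t (those with U_t(0) = 0):
   otherwise a direction h separates 0 from these subgradients, while maximal U_t at the points s h
   with s -> 0 supply subgradients l with l . h >= 0 whose limit is an active subgradient.
   Caratheodory's theorem in R^n shortens the combination to at most n + 1 terms; averaging the
   subgradient inequalities gives (i), and activity is (ii).  Conversely (i) and (ii) bound E by a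
   weighted mean of values of |f_a(x) - f(x)|, each at most max_a |||f_a - f|||. *)

(* R^n for a dimension n that is a value rather than a type: sequences supported in {..<n}. *)
typedef finseq = "{x :: nat \<Rightarrow> real. finite {i. x i \<noteq> 0}}"
  morphisms coord Abs_finseq
  by (rule exI[of _ "\<lambda>_. 0"]) simp

setup_lifting type_definition_finseq

lemma finseq_eqI: "(\<And>i. coord x i = coord y i) \<Longrightarrow> x = y"
  by (metis coord_inject ext)

lemma finite_coord_support: "finite {i. coord x i \<noteq> 0}"
  using coord by auto

lemma finite_support_map2:
  fixes g :: "'a::zero \<Rightarrow> 'b::zero \<Rightarrow> 'c::zero"
  assumes "g 0 0 = 0" "finite {i. x i \<noteq> 0}" "finite {i. y i \<noteq> 0}"
  shows "finite {i. g (x i) (y i) \<noteq> 0}"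
  by (rule finite_subset[of _ "{i. x i \<noteq> 0} \<union> {i. y i \<noteq> 0}"]) (use assms in auto)

instantiation finseq :: real_vector
begin

lift_definition zero_finseq :: finseq is "\<lambda>_. 0"
  by simp

lift_definition plus_finseq :: "finseq \<Rightarrow> finseq \<Rightarrow> finseq" is "\<lambda>x y i. x i + y i"
  by (rule finite_support_map2) simp_all

lift_definition uminus_finseq :: "finseq \<Rightarrow> finseq" is "\<lambda>x i. - x i"
  by simp

lift_definition minus_finseq :: "finseq \<Rightarrow> finseq \<Rightarrow> finseq" is "\<lambda>x y i. x i - y i"
  by (rule finite_support_map2) simp_all

lift_definition scaleR_finseq :: "real \<Rightarrow> finseq \<Rightarrow> finseq" is "\<lambda>c x i. c * x i"
  by (rule finite_subset) auto

instance
  by standard (transfer; auto simp: algebra_simps fun_eq_iff)+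

end

lemma coord_zero [simp]: "coord 0 i = 0"
  by transfer simp

lemma coord_add [simp]: "coord (x + y) i = coord x i + coord y i"
  by transfer simp

lemma coord_diff [simp]: "coord (x - y) i = coord x i - coord y i"
  by transfer simp

lemma coord_scaleR [simp]: "coord (c *\<^sub>R x) i = c * coord x i"
  by transfer simp

lemma coord_sum [simp]: "coord (sum g A) i = (\<Sum>a\<in>A. coord (g a) i)"
  by (induction A rule: infinite_finite_induct) auto

instantiation finseq :: real_inner
begin

definition inner_finseq :: "finseq \<Rightarrow> finseq \<Rightarrow> real" where
  "inner_finseq x y = (\<Sum>i | coord x i \<noteq> 0. coord x i * coord y i)"

definition norm_finseq :: "finseq \<Rightarrow> real" where
  "norm_finseq x = sqrt (inner x x)"

definition sgn_finseq :: "finseq \<Rightarrow> finseq" where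
  "sgn_finseq x = x /\<^sub>R norm x"

definition dist_finseq :: "finseq \<Rightarrow> finseq \<Rightarrow> real" where
  "dist_finseq x y = norm (x - y)"

definition uniformity_finseq :: "(finseq \<times> finseq) filter" where
  "uniformity_finseq = (INF e\<in>{0<..}. principal {(x, y). dist x y < e})"

definition open_finseq :: "finseq set \<Rightarrow> bool" where
  "open_finseq U \<longleftrightarrow> (\<forall>x\<in>U. \<forall>\<^sub>F (x', y) in uniformity. x' = x \<longrightarrow> y \<in> U)"

lemma inner_finseq_eq:
  assumes "finite S" "{i. coord x i \<noteq> 0} \<subseteq> S"
  shows "inner x y = (\<Sum>i\<in>S. coord x i * coord y i)"
  unfolding inner_finseq_def by (rule sum.mono_neutral_left) (use assms in auto)

instance
proof
  fix x y z :: finseq and r :: real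
  define S where "S = {i. coord x i \<noteq> 0} \<union> {i. coord y i \<noteq> 0}"
  have S: "finite S" "{i. coord x i \<noteq> 0} \<subseteq> S" "{i. coord y i \<noteq> 0} \<subseteq> S"
    "{i. coord (x + y) i \<noteq> 0} \<subseteq> S" "{i. coord (r *\<^sub>R x) i \<noteq> 0} \<subseteq> S"
    unfolding S_def using finite_coord_support by auto
  note inner_S = inner_finseq_eq[OF S(1)]
  show "inner x y = inner y x"
    using inner_S[OF S(2)] inner_S[OF S(3)] by (simp add: mult.commute)
  show "inner (x + y) z = inner x z + inner y z"
    using inner_S[OF S(4)] inner_S[OF S(2)] inner_S[OF S(3)] by (simp add: distrib_right sum.distrib)
  show "inner (r *\<^sub>R x) y = r * inner x y"
    using inner_S[OF S(5)] inner_S[OF S(2)] by (simp add: sum_distrib_left mult.assoc)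
  show "0 \<le> inner x x"
    unfolding inner_finseq_def by (auto intro: sum_nonneg)
  show "inner x x = 0 \<longleftrightarrow> x = 0"
  proof
    assume "inner x x = 0"
    then have "\<forall>i\<in>{i. coord x i \<noteq> 0}. coord x i * coord x i = 0"
      unfolding inner_finseq_def by (subst (asm) sum_nonneg_eq_0_iff[OF finite_coord_support]) auto
    then show "x = 0"
      by (intro finseq_eqI) auto
  qed (simp add: inner_finseq_def)
qed (simp_all add: norm_finseq_def sgn_finseq_def dist_finseq_def uniformity_finseq_def open_finseq_def)

end

lemma abs_coord_le_norm: "\<bar>coord x i\<bar> \<le> norm x"
proof -
  let ?S = "insert i {i. coord x i \<noteq> 0}"
  have "(coord x i)\<^sup>2 \<le> (\<Sum>j\<in>?S. coord x j * coord x j)"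
    using finite_coord_support by (auto simp: power2_eq_square intro: member_le_sum)
  also have "\<dots> = (norm x)\<^sup>2"
    unfolding power2_norm_eq_inner by (rule inner_finseq_eq[symmetric]) (use finite_coord_support in auto)
  finally show ?thesis
    using abs_le_square_iff[of "coord x i" "norm x"] by simp
qed

lemma bounded_linear_coord: "bounded_linear (\<lambda>x. coord x i)"
  by standard (use abs_coord_le_norm in \<open>auto intro: exI[of _ 1]\<close>)

lemma continuous_on_coord [continuous_intros]:
  "continuous_on S g \<Longrightarrow> continuous_on S (\<lambda>s. coord (g s) i)"
  using bounded_linear.continuous_on[OF bounded_linear_coord] .

lift_definition unit_coord :: "nat \<Rightarrow> finseq" is "\<lambda>j i. if i = j then 1 else 0"
  by simp

lemma coord_unit_coord [simp]: "coord (unit_coord j) i = (if i = j then 1 else 0)"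
  by transfer simp

definition coord_space :: "nat \<Rightarrow> finseq set" where
  "coord_space n = {x. \<forall>i\<ge>n. coord x i = 0}"

lemma subspace_coord_space: "subspace (coord_space n)"
  unfolding subspace_def coord_space_def by auto

lemma closed_coord_space: "closed (coord_space n)"
proof -
  have "coord_space n = (\<Inter>i\<in>{n..}. {x. coord x i = 0})"
    unfolding coord_space_def by auto
  then show ?thesis
    by (auto intro!: closed_INT closed_Collect_eq continuous_intros)
qed

lemma inner_coord_space:
  assumes "x \<in> coord_space n"
  shows "inner x z = (\<Sum>j<n. coord x j * coord z j)"
proof (rule inner_finseq_eq)
  show "{i. coord x i \<noteq> 0} \<subseteq> {..<n}"
    using assms by (auto simp: coord_space_def not_less[symmetric])
qed simp

lemma coord_space_eq_sum:
  assumes "x \<in> coord_space n"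
  shows "x = (\<Sum>j<n. coord x j *\<^sub>R unit_coord j)"
proof (rule finseq_eqI)
  fix i
  show "coord x i = coord (\<Sum>j<n. coord x j *\<^sub>R unit_coord j) i"
    using assms by (cases "i < n") (auto simp: coord_space_def if_distrib[of "(*) _"] cong: if_cong)
qed

lemma coord_space_eq_span: "coord_space n = span (unit_coord ` {..<n})"
proof
  show "coord_space n \<subseteq> span (unit_coord ` {..<n})"
  proof
    fix x assume "x \<in> coord_space n"
    have "(\<Sum>j<n. coord x j *\<^sub>R unit_coord j) \<in> span (unit_coord ` {..<n})"
      by (intro span_sum span_scale span_base) auto
    then show "x \<in> span (unit_coord ` {..<n})"
      using coord_space_eq_sum[OF \<open>x \<in> coord_space n\<close>] by simp
  qed
  show "span (unit_coord ` {..<n}) \<subseteq> coord_space n"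
    by (rule span_minimal[OF _ subspace_coord_space]) (auto simp: coord_space_def)
qed

lemma card_independent_coord_space:
  assumes "B \<subseteq> coord_space n" "independent B"
  shows "card B \<le> n"
proof -
  have "card B \<le> card (unit_coord ` {..<n})"
    using independent_span_bound[of "unit_coord ` {..<n}" B] assms coord_space_eq_span by auto
  also have "\<dots> \<le> n"
    using card_image_le[of "{..<n}" unit_coord] by simp
  finally show ?thesis .
qed

lemma coord_space_exists: "\<exists>x\<in>coord_space n. \<forall>j<n. coord x j = c j"
proof
  let ?x = "\<Sum>j<n. c j *\<^sub>R unit_coord j"
  show "\<forall>j<n. coord ?x j = c j" "?x \<in> coord_space n"
    by (auto simp: coord_space_def if_distrib[of "(*) _"] cong: if_cong)
qed

lemma compact_coord_space_cball: "compact (coord_space n \<inter> cball 0 r)"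
proof (induction n)
  case 0
  have "coord_space 0 = {0}"
    unfolding coord_space_def by (auto intro: finseq_eqI)
  then show ?case
    by (auto intro: finite_imp_compact)
next
  case (Suc n)
  let ?K = "(\<lambda>(x, c). x + c *\<^sub>R unit_coord n) ` ((coord_space n \<inter> cball 0 r) \<times> {-r..r})"
  have "compact ?K"
    by (intro compact_continuous_image compact_Times Suc.IH compact_Icc)
       (auto intro!: continuous_intros simp: case_prod_unfold)
  moreover have "coord_space (Suc n) \<inter> cball 0 r \<subseteq> ?K"
  proof
    fix x assume x: "x \<in> coord_space (Suc n) \<inter> cball 0 r"
    define y where "y = x - coord x n *\<^sub>R unit_coord n"
    have y: "y \<in> coord_space n"
      using x by (auto simp: y_def coord_space_def)
    have "inner y y = (\<Sum>j<n. coord x j * coord x j)"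
      using inner_coord_space[OF y] by (simp add: y_def)
    also have "\<dots> \<le> (\<Sum>j<Suc n. coord x j * coord x j)"
      by simp
    also have "\<dots> = inner x x"
      using x inner_coord_space by auto
    finally have "norm y \<le> norm x"
      by (simp add: norm_eq_sqrt_inner)
    then have "(y, coord x n) \<in> (coord_space n \<inter> cball 0 r) \<times> {-r..r}"
      using x y abs_coord_le_norm[of x n] by auto
    then show "x \<in> ?K"
      by (rule image_eqI[rotated]) (simp add: y_def)
  qed
  moreover have "closed (coord_space (Suc n) \<inter> cball 0 r)"
    by (intro closed_Int closed_coord_space closed_cball)
  ultimately show ?case
    by (metis compact_Int_closed inf.absorb_iff2)
qed

lemma compact_convex_min_norm_point:
  fixes C :: "'a::real_inner set"
  assumes "compact C" "convex C" "C \<noteq> {}"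
  obtains y where "y \<in> C" "\<And>x. x \<in> C \<Longrightarrow> inner y y \<le> inner y x"
proof -
  obtain y where y: "y \<in> C" "\<And>x. x \<in> C \<Longrightarrow> norm y \<le> norm x"
    using continuous_attains_inf[OF assms(1,3) continuous_on_norm_id] by blast
  have "inner (0 - y) (x - y) \<le> 0" if "x \<in> C" for x
    using y by (intro any_closest_point_dot[OF assms(2) compact_imp_closed[OF assms(1)] y(1) that]) auto
  then show ?thesis
    using that[OF y(1)] by (simp add: inner_diff_right)
qed

lemma separating_hyperplane_set_0_subspace:
  fixes S W :: "'a::real_inner set"
  assumes "convex S" "S \<noteq> {}" "0 \<notin> S" "S \<subseteq> W" "subspace W" "compact {a \<in> W. norm a = 1}"
  obtains a where "a \<in> W" "a \<noteq> 0" "\<And>x. x \<in> S \<Longrightarrow> 0 \<le> inner a x"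
proof -
  have "{a \<in> W. norm a = 1} \<inter> (\<Inter>x\<in>S. {a. 0 \<le> inner a x}) \<noteq> {}"
  proof (rule compact_imp_fip_image[OF assms(6)])
    show "closed {a. 0 \<le> inner a x}" for x
      by (intro closed_Collect_le continuous_intros)
    fix I assume I: "finite I" "I \<subseteq> S"
    obtain x0 where "x0 \<in> S"
      using assms(2) by blast
    let ?C = "convex hull (insert x0 I)"
    have "compact ?C"
      using I(1) by (simp add: finite_imp_compact_convex_hull)
    then obtain y where y: "y \<in> ?C" "\<And>x. x \<in> ?C \<Longrightarrow> inner y y \<le> inner y x"
      by (rule compact_convex_min_norm_point) auto
    have "?C \<subseteq> S"
      using I \<open>x0 \<in> S\<close> assms(1) by (simp add: hull_minimal)
    then have "y \<in> S" "y \<noteq> 0"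
      using y(1) assms(3) by auto
    have "0 \<le> inner (y /\<^sub>R norm y) x" if "x \<in> I" for x
    proof -
      have "inner y y \<le> inner y x"
        using y(2) that by (simp add: hull_inc)
      then have "0 \<le> inner y x"
        using inner_ge_zero[of y] by linarith
      then show ?thesis
        by simp
    qed
    moreover have "y /\<^sub>R norm y \<in> {a \<in> W. norm a = 1}"
      using \<open>y \<in> S\<close> \<open>y \<noteq> 0\<close> assms(4) subspace_scale[OF assms(5)] by auto
    ultimately show "{a \<in> W. norm a = 1} \<inter> (\<Inter>x\<in>I. {a. 0 \<le> inner a x}) \<noteq> {}"
      by blast
  qed
  then obtain a where "a \<in> W" "norm a = 1" "\<And>x. x \<in> S \<Longrightarrow> 0 \<le> inner a x"
    by auto
  then show ?thesis
    using that[of a] by (metis norm_zero zero_neq_one)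
qed

lemma convex_strict_epigraph:
  assumes "convex_on S f"
  shows "convex {(x, r). x \<in> S \<and> f x < r}"
  unfolding convex_alt
proof clarsimp
  fix x y :: 'a and r s t :: real
  assume xy: "x \<in> S" "y \<in> S" "f x < r" "f y < s" and t: "0 \<le> t" "t \<le> 1"
  have "(1 - t) *\<^sub>R x + t *\<^sub>R y \<in> S"
    using convex_on_imp_convex[OF assms] xy t by (simp add: convexD_alt)
  moreover have "f ((1 - t) *\<^sub>R x + t *\<^sub>R y) \<le> (1 - t) * f x + t * f y"
    using convex_onD[OF assms] xy t by blast
  moreover have "(1 - t) * f x + t * f y < (1 - t) * r + t * s"
  proof (cases "t = 1")
    case True
    then show ?thesis using xy by simp
  next
    case False
    then have "(1 - t) * f x < (1 - t) * r" "t * f y \<le> t * s"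
      using xy t by (auto intro: mult_left_mono)
    then show ?thesis by linarith
  qed
  ultimately show "(1 - t) *\<^sub>R x + t *\<^sub>R y \<in> S \<and> f ((1 - t) *\<^sub>R x + t *\<^sub>R y) < (1 - t) * r + t * s"
    by linarith
qed

lemma subgradient_norm_le:
  fixes l p :: "'a::real_inner"
  assumes "subspace V" "p \<in> V" "l \<in> V" "0 \<le> L"
    and subgradient: "\<And>w. w \<in> V \<Longrightarrow> inner l (w - p) \<le> \<phi> w - \<phi> p"
    and lipschitz: "\<And>w. w \<in> V \<Longrightarrow> \<phi> w - \<phi> p \<le> L * norm (w - p)"
  shows "norm l \<le> L"
proof -
  have "p + l \<in> V"
    using assms by (simp add: subspace_add)
  then have "norm l * norm l \<le> L * norm l"
    using subgradient[of "p + l"] lipschitz[of "p + l"] by (simp add: power2_norm_eq_inner[symmetric] power2_eq_square)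
  then show ?thesis
    using \<open>0 \<le> L\<close> by (cases "l = 0") auto
qed

lemma sum_eq_0_obtains_pos:
  fixes w :: "'a \<Rightarrow> real"
  assumes "finite S" "sum w S = 0" "v \<in> S" "w v \<noteq> 0"
  obtains x where "x \<in> S" "0 < w x"
proof -
  have "\<not> (\<forall>x\<in>S. w x \<le> 0)"
  proof
    assume "\<forall>x\<in>S. w x \<le> 0"
    then have "\<forall>x\<in>S. - w x = 0"
      using sum_nonneg_eq_0_iff[OF assms(1), of "\<lambda>x. - w x"] assms(2) by (simp add: sum_negf)
    then show False
      using assms(3,4) by simp
  qed
  then show ?thesis
    using that by (auto simp: not_le)
qed

lemma convex_hull_remove_point:
  fixes S :: "'a::real_vector set"
  assumes S: "finite S" "affine_dependent S" and y: "y \<in> convex hull S"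
  obtains a where "a \<in> S" "y \<in> convex hull (S - {a})"
proof -
  obtain u where u: "\<forall>x\<in>S. 0 \<le> u x" "sum u S = 1" "(\<Sum>x\<in>S. u x *\<^sub>R x) = y"
    using y convex_hull_finite[OF S(1)] by auto
  obtain w v where w: "sum w S = 0" "v \<in> S" "w v \<noteq> 0" "(\<Sum>x\<in>S. w x *\<^sub>R x) = 0"
    using S affine_dependent_explicit_finite by blast
  define P where "P = {x \<in> S. 0 < w x}"
  have "P \<noteq> {}"
    using sum_eq_0_obtains_pos[OF S(1) w(1-3)] by (auto simp: P_def)
  have "finite P"
    using S(1) by (simp add: P_def)
  \<comment> \<open>move along \<open>u - t w\<close> until the first weight vanishes\<close>
  define t where "t = Min ((\<lambda>x. u x / w x) ` P)"
  have "t \<in> (\<lambda>x. u x / w x) ` P"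
    unfolding t_def using \<open>finite P\<close> \<open>P \<noteq> {}\<close> by (intro Min_in) auto
  then obtain a where a: "a \<in> P" "t = u a / w a"
    by blast
  define u' where "u' x = u x - t * w x" for x
  have u'_nonneg: "0 \<le> u' x" if "x \<in> S" for x
  proof (cases "0 < w x")
    case True
    then have "t \<le> u x / w x"
      unfolding t_def using that \<open>finite P\<close> by (auto simp: P_def)
    then show ?thesis
      using True by (simp add: u'_def field_simps)
  next
    case False
    have "0 \<le> t"
      using a u(1) by (auto simp: P_def)
    then have "t * w x \<le> 0"
      using False by (simp add: mult_nonneg_nonpos)
    moreover have "0 \<le> u x"
      using u(1) that by blast
    ultimately show ?thesis
      by (simp add: u'_def)
  qed
  have "u' a = 0"
    using a by (simp add: u'_def P_def)
  have "a \<in> S"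
    using a by (simp add: P_def)
  have "(\<Sum>x\<in>S. (t * w x) *\<^sub>R x) = t *\<^sub>R (\<Sum>x\<in>S. w x *\<^sub>R x)"
    by (simp add: scaleR_sum_right)
  then have "sum u' S = 1" "(\<Sum>x\<in>S. u' x *\<^sub>R x) = y"
    using u w by (simp_all add: u'_def sum_subtractf sum_distrib_left[symmetric] scaleR_diff_left)
  then have "sum u' (S - {a}) = 1" "(\<Sum>x\<in>S - {a}. u' x *\<^sub>R x) = y"
    using \<open>u' a = 0\<close> \<open>a \<in> S\<close> S(1) by (simp_all add: sum_diff1)
  then have "y \<in> convex hull (S - {a})"
    using u'_nonneg S(1) by (auto simp: convex_hull_finite)
  then show ?thesis
    using that \<open>a \<in> S\<close> by blast
qed

(* Convex combinations of at most m + 1 points of D, built up so that compactness is inherited. *)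
fun convex_combs :: "'a::real_vector set \<Rightarrow> nat \<Rightarrow> 'a set" where
  "convex_combs D 0 = D"
| "convex_combs D (Suc m) = (\<lambda>(d, x, u). (1 - u) *\<^sub>R d + u *\<^sub>R x) ` (D \<times> convex_combs D m \<times> {0..1})"

lemma compact_convex_combs:
  fixes D :: "'a::real_normed_vector set"
  assumes "compact D"
  shows "compact (convex_combs D m)"
proof (induction m)
  case (Suc m)
  then show ?case
    using assms by (auto intro!: compact_continuous_image compact_Times continuous_intros
        simp: case_prod_unfold)
qed (simp add: assms)

lemma convex_combs_subset_convex_hull: "convex_combs D m \<subseteq> convex hull D"
proof (induction m)
  case (Suc m)
  show ?case
  proof
    fix x assume "x \<in> convex_combs D (Suc m)"
    then obtain d y u where "x = (1 - u) *\<^sub>R d + u *\<^sub>R y" "d \<in> D" "y \<in> convex_combs D m" "u \<in> {0..1}"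
      by auto
    then show "x \<in> convex hull D"
      using Suc by (metis convexD_alt convex_convex_hull hull_inc subsetD atLeastAtMost_iff)
  qed
qed (simp add: hull_subset)

lemma convex_combs_Suc_mono: "convex_combs D m \<subseteq> convex_combs D (Suc m)"
proof
  fix x assume x: "x \<in> convex_combs D m"
  then obtain d where "d \<in> D"
    using convex_combs_subset_convex_hull[of D m] by fastforce
  with x show "x \<in> convex_combs D (Suc m)"
    by (auto intro!: image_eqI[of _ _ "(d, x, 1)"])
qed

lemma convex_hull_subset_convex_combs:
  assumes "finite S" "S \<subseteq> D" "card S \<le> m + 1"
  shows "convex hull S \<subseteq> convex_combs D m"
  using assms
proof (induction S arbitrary: m rule: finite_induct)
  case (insert d S)
  show ?case
  proof (cases "S = {}")
    case True
    have "convex_combs D 0 \<subseteq> convex_combs D m"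
      by (induction m) (use convex_combs_Suc_mono in blast)+
    then show ?thesis
      using True insert.prems by auto
  next
    case False
    then obtain m' where m: "m = Suc m'" "card S \<le> m' + 1"
      using insert by (cases m) (auto simp: card_gt_0_iff)
    show ?thesis
    proof
      fix x assume "x \<in> convex hull (insert d S)"
      then obtain u v b where "0 \<le> u" "0 \<le> v" "u + v = 1" "b \<in> convex hull S" "x = u *\<^sub>R d + v *\<^sub>R b"
        using convex_hull_insert[OF False] by auto
      moreover have "b \<in> convex_combs D m'"
        using insert m \<open>b \<in> convex hull S\<close> by auto
      ultimately show "x \<in> convex_combs D m"
        using insert.prems m by (auto intro!: image_eqI[of _ _ "(d, b, v)"] simp: eq_diff_eq')
    qed
  qed
qed simp

lemma convex_combs_representation:
  assumes "x \<in> convex_combs D m"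
  shows "\<exists>k lam l. 1 \<le> k \<and> k \<le> m + 1 \<and> (\<forall>i<k. 0 < lam i \<and> l i \<in> D) \<and> (\<Sum>i<k. lam i) = 1
     \<and> x = (\<Sum>i<k. lam i *\<^sub>R l i)"
  using assms
proof (induction m arbitrary: x)
  case 0
  then show ?case
    by (intro exI[of _ 1] exI[of _ "\<lambda>_. 1"] exI[of _ "\<lambda>_. x"]) auto
next
  case (Suc m)
  then obtain d y u where x: "x = (1 - u) *\<^sub>R d + u *\<^sub>R y" "d \<in> D" "y \<in> convex_combs D m" "u \<in> {0..1}"
    by auto
  obtain k lam l where rep: "1 \<le> k" "k \<le> m + 1" "\<forall>i<k. 0 < lam i \<and> l i \<in> D" "(\<Sum>i<k. lam i) = 1"
    "y = (\<Sum>i<k. lam i *\<^sub>R l i)"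
    using Suc.IH[OF x(3)] by blast
  consider "u = 0" | "u = 1" | "0 < u" "u < 1"
    using x(4) by fastforce
  then show ?case
  proof cases
    case 1
    then show ?thesis
      using x by (intro exI[of _ 1] exI[of _ "\<lambda>_. 1"] exI[of _ "\<lambda>_. d"]) auto
  next
    case 2
    then show ?thesis
      using x rep by (intro exI[of _ k] exI[of _ lam] exI[of _ l]) auto
  next
    case 3
    define lam' where "lam' i = (if i = 0 then 1 - u else u * lam (i - 1))" for i
    define l' where "l' i = (if i = 0 then d else l (i - 1))" for i
    have "\<forall>i<Suc k. 0 < lam' i \<and> l' i \<in> D"
      using 3 rep x(2) by (auto simp: lam'_def l'_def less_Suc_eq_0_disj)
    moreover have "(\<Sum>i<Suc k. lam' i) = 1"
      using rep by (subst sum.lessThan_Suc_shift) (simp add: lam'_def sum_distrib_left[symmetric])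
    moreover have "x = (\<Sum>i<Suc k. lam' i *\<^sub>R l' i)"
      using rep x by (subst sum.lessThan_Suc_shift) (simp add: lam'_def l'_def scaleR_sum_right)
    ultimately show ?thesis
      using rep by (intro exI[of _ "Suc k"] exI[of _ lam'] exI[of _ l']) auto
  qed
qed

locale finite_dim_subspace =
  fixes V :: "'v::real_inner set" and n :: nat
  assumes subspace_V: "subspace V"
    and card_independent_le: "\<And>B. B \<subseteq> V \<Longrightarrow> independent B \<Longrightarrow> card B \<le> n"
    and compact_Int_cball: "\<And>r. compact (V \<inter> cball 0 r)"
begin

lemma compact_Times_UNIV_sphere:
  "compact {x \<in> V \<times> (UNIV :: real set). norm x = 1}"
proof -
  have "norm a \<le> 1" "norm b \<le> 1" if "norm (a, b) = 1" for a :: 'v and b :: real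
    using that norm_fst_le[of a b] norm_snd_le[of b a] by auto
  then have "{x \<in> V \<times> (UNIV :: real set). norm x = 1} = ((V \<inter> cball 0 1) \<times> cball 0 1) \<inter> {x. norm x = 1}"
    by auto
  moreover have "closed {x :: 'v \<times> real. norm x = 1}"
    by (intro closed_Collect_eq continuous_intros)
  moreover have "compact ((V \<inter> cball 0 1) \<times> cball (0::real) 1)"
    by (intro compact_Times compact_Int_cball compact_cball)
  ultimately show ?thesis
    by (simp add: compact_Int_closed)
qed

lemma strict_epigraph_supporting_hyperplane:
  assumes "convex_on V \<phi>" "p \<in> V"
  obtains \<alpha> \<beta> where "\<alpha> \<in> V" "0 < \<beta>"
    "\<And>w r. w \<in> V \<Longrightarrow> \<phi> w < r \<Longrightarrow> 0 \<le> inner \<alpha> (w - p) + \<beta> * (r - \<phi> p)"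
proof -
  define S where "S = (\<lambda>z. z - (p, \<phi> p)) ` {(w, r). w \<in> V \<and> \<phi> w < r}"
  have "(0, 1) \<in> S"
    using assms(2) by (auto simp: S_def intro!: image_eqI[of _ _ "(p, \<phi> p + 1)"])
  moreover have "0 \<notin> S"
    by (auto simp: S_def zero_prod_def)
  moreover have "S \<subseteq> V \<times> UNIV"
    using assms(2) subspace_V by (auto simp: S_def subspace_diff)
  ultimately obtain a where a: "a \<in> V \<times> UNIV" "a \<noteq> 0" "\<And>x. x \<in> S \<Longrightarrow> 0 \<le> inner a x"
    using separating_hyperplane_set_0_subspace[of S "V \<times> UNIV"] compact_Times_UNIV_sphere
      convex_translation_subtract[OF convex_strict_epigraph[OF assms(1)]]
      subspace_Times[OF subspace_V subspace_UNIV]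
    unfolding S_def by blast
  obtain \<alpha> \<beta> where ab: "a = (\<alpha>, \<beta>)" "\<alpha> \<in> V"
    using a(1) by auto
  have key: "0 \<le> inner \<alpha> (w - p) + \<beta> * (r - \<phi> p)" if "w \<in> V" "\<phi> w < r" for w r
  proof -
    have "(w - p, r - \<phi> p) \<in> S"
      unfolding S_def using that by (intro image_eqI[of _ _ "(w, r)"]) auto
    then show ?thesis
      using a(3) by (force simp: ab)
  qed
  have "0 \<le> \<beta>"
    using key[OF assms(2), of "\<phi> p + 1"] by simp
  moreover have "\<beta> \<noteq> 0"
  proof
    assume "\<beta> = 0"
    \<comment> \<open>then \<open>\<alpha>\<close> would be a nonzero functional bounded below on the whole subspace \<open>V\<close>\<close>
    then have "0 \<le> inner \<alpha> (- \<alpha>)"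
      using key[of "p - \<alpha>" "\<phi> (p - \<alpha>) + 1"] assms(2) ab(2) subspace_V by (simp add: subspace_diff)
    then have "\<alpha> = 0"
      using inner_ge_zero[of \<alpha>] by simp
    then show False
      using a(2) ab \<open>\<beta> = 0\<close> by (simp add: zero_prod_def)
  qed
  ultimately show ?thesis
    by (intro that[OF ab(2) _ key]) auto
qed

lemma subgradient_exists:
  assumes "convex_on V \<phi>" "p \<in> V"
  obtains l where "l \<in> V" "\<And>w. w \<in> V \<Longrightarrow> inner l (w - p) \<le> \<phi> w - \<phi> p"
proof -
  obtain \<alpha> \<beta> where ab: "\<alpha> \<in> V" "0 < \<beta>"
    and key: "\<And>w r. w \<in> V \<Longrightarrow> \<phi> w < r \<Longrightarrow> 0 \<le> inner \<alpha> (w - p) + \<beta> * (r - \<phi> p)"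
    using assms by (rule strict_epigraph_supporting_hyperplane) blast
  have "inner (- (1 / \<beta>) *\<^sub>R \<alpha>) (w - p) \<le> \<phi> w - \<phi> p" if "w \<in> V" for w
  proof -
    have "- (inner \<alpha> (w - p) + \<beta> * (\<phi> w - \<phi> p)) \<le> 0"
    proof (rule field_le_epsilon)
      fix e :: real assume "0 < e"
      then show "- (inner \<alpha> (w - p) + \<beta> * (\<phi> w - \<phi> p)) \<le> 0 + e"
        using key[OF that, of "\<phi> w + e / \<beta>"] ab(2) by (simp add: algebra_simps)
    qed
    then show ?thesis
      using ab(2) by (simp add: field_simps)
  qed
  moreover have "- (1 / \<beta>) *\<^sub>R \<alpha> \<in> V"
    using ab(1) subspace_V by (simp add: subspace_scale subspace_neg)
  ultimately show ?thesis
    using that by blast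
qed

lemma affine_dependent_of_card:
  assumes "finite S" "S \<subseteq> V" "n + 2 \<le> card S"
  shows "affine_dependent S"
proof -
  obtain a where a: "a \<in> S"
    using assms(3) by fastforce
  let ?T = "(\<lambda>x. x - a) ` (S - {a})"
  have "card ?T = card S - 1"
    using a assms(1) by (simp add: card_image inj_on_def)
  moreover have "?T \<subseteq> V"
    using a assms(2) by (auto intro: subspace_diff[OF subspace_V])
  ultimately have "dependent ?T"
    using card_independent_le[of ?T] assms(3) by (cases "dependent ?T") auto
  moreover have "?T = {x - a | x. x \<in> S - {a}}"
    by auto
  ultimately have "affine_dependent (insert a (S - {a}))"
    by (intro dependent_imp_affine_dependent) auto
  then show ?thesis
    using a by (simp add: insert_absorb)
qed

lemma caratheodory:
  assumes "finite S" "S \<subseteq> V" "y \<in> convex hull S"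
  shows "\<exists>T\<subseteq>S. card T \<le> n + 1 \<and> y \<in> convex hull T"
  using assms
proof (induction S rule: finite_psubset_induct)
  case (psubset S)
  show ?case
  proof (cases "card S \<le> n + 1")
    case True
    then show ?thesis
      using psubset.prems(2) by (intro exI[of _ S]) simp
  next
    case False
    then have "affine_dependent S"
      using psubset.hyps psubset.prems(1) by (intro affine_dependent_of_card) auto
    obtain a where a: "a \<in> S" "y \<in> convex hull (S - {a})"
      using psubset.hyps \<open>affine_dependent S\<close> psubset.prems(2) by (rule convex_hull_remove_point)
    have "\<exists>T\<subseteq>S - {a}. card T \<le> n + 1 \<and> y \<in> convex hull T"
      by (rule psubset.IH) (use a psubset.prems(1) in auto)
    then show ?thesis
      by auto
  qed
qed

lemma convex_hull_eq_convex_combs: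
  assumes "D \<subseteq> V"
  shows "convex hull D = convex_combs D n"
proof
  show "convex hull D \<subseteq> convex_combs D n"
  proof
    fix y assume "y \<in> convex hull D"
    then obtain S where S: "finite S" "S \<subseteq> D" "y \<in> convex hull S"
      by (auto simp: convex_hull_explicit convex_hull_finite)
    then obtain T where "T \<subseteq> S" "card T \<le> n + 1" "y \<in> convex hull T"
      using caratheodory[of S y] assms by blast
    then show "y \<in> convex_combs D n"
      using convex_hull_subset_convex_combs[of T D n] S by (meson finite_subset order.trans subsetD)
  qed
qed (rule convex_combs_subset_convex_hull)

lemma compact_convex_hull:
  assumes "compact D" "D \<subseteq> V"
  shows "compact (convex hull D)"
  using convex_hull_eq_convex_combs[OF assms(2)] compact_convex_combs[OF assms(1)] by simp

lemma separating_direction: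
  assumes "compact D" "D \<subseteq> V" "0 \<notin> convex hull D"
  obtains h where "h \<in> V" "\<And>l. l \<in> D \<Longrightarrow> inner l h < 0"
proof (cases "D = {}")
  case True
  then show ?thesis
    using that[of 0] subspace_V by (simp add: subspace_0)
next
  case False
  obtain y where y: "y \<in> convex hull D" "\<And>x. x \<in> convex hull D \<Longrightarrow> inner y y \<le> inner y x"
    by (rule compact_convex_min_norm_point[OF compact_convex_hull[OF assms(1,2)] convex_convex_hull])
      (use False in auto)
  have "0 < inner y y"
    using y(1) assms(3) by auto
  moreover have "convex hull D \<subseteq> V"
    using assms(2) subspace_V by (simp add: hull_minimal subspace_imp_convex)
  moreover have "inner l (- y) < 0" if "l \<in> D" for l
  proof -
    have "inner y y \<le> inner y l"
      using y(2) that by (simp add: hull_inc)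
    then have "0 < inner l y"
      using \<open>0 < inner y y\<close> inner_commute[of y l] by linarith
    then show ?thesis
      by simp
  qed
  ultimately show ?thesis
    using y(1) subspace_V by (intro that[of "- y"]) (auto simp: subspace_neg)
qed

end

locale convex_minimax = finite_dim_subspace V n
  for V :: "'v::real_inner set" and n :: nat +
  fixes U :: "'t::topological_space \<Rightarrow> 'v \<Rightarrow> real" and L :: real
  assumes compact_index: "compact (UNIV :: 't set)"
    and continuous_U: "continuous_on UNIV (\<lambda>(t, v). U t v)"
    and convex_U: "\<And>t. convex_on V (U t)"
    and lipschitz_U: "\<And>t v w. v \<in> V \<Longrightarrow> w \<in> V \<Longrightarrow> U t w - U t v \<le> L * norm (w - v)"
    and nonneg_L: "0 \<le> L"
begin

lemma continuous_on_U [continuous_intros]: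
  assumes "continuous_on S g" "continuous_on S h"
  shows "continuous_on S (\<lambda>x. U (g x) (h x))"
  using continuous_on_compose2[OF continuous_U continuous_on_Pair[OF assms]] by simp

lemma subgradient_norm_le_L:
  assumes "p \<in> V" "l \<in> V" "\<And>w. w \<in> V \<Longrightarrow> inner l (w - p) \<le> U t w - U t p"
  shows "norm l \<le> L"
  by (rule subgradient_norm_le[OF subspace_V assms(1,2) nonneg_L assms(3) lipschitz_U[OF assms(1)]])

definition active_subgradients :: "'v set" where
  "active_subgradients = {l \<in> V. \<exists>t. U t 0 = 0 \<and> (\<forall>w\<in>V. inner l w \<le> U t w)}"

lemma compact_active_subgradients: "compact active_subgradients"
proof -
  define Z where "Z = (UNIV \<times> (V \<inter> cball 0 L)) \<inter> {x. U (fst x) 0 = 0} \<inter>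
    (\<Inter>w\<in>V. {x. inner (snd x) w \<le> U (fst x) w})"
  have "compact (UNIV \<times> (V \<inter> cball 0 L) :: ('t \<times> 'v) set)"
    by (intro compact_Times compact_index compact_Int_cball)
  moreover have "closed ({x :: 't \<times> 'v. U (fst x) 0 = 0} \<inter> (\<Inter>w\<in>V. {x. inner (snd x) w \<le> U (fst x) w}))"
    by (intro closed_Int closed_INT ballI closed_Collect_eq closed_Collect_le continuous_intros)
  ultimately have "compact Z"
    unfolding Z_def Int_assoc by (rule compact_Int_closed)
  moreover have "active_subgradients = snd ` Z"
  proof
    show "snd ` Z \<subseteq> active_subgradients"
      by (force simp: Z_def active_subgradients_def)
    show "active_subgradients \<subseteq> snd ` Z"
    proof
      fix l assume "l \<in> active_subgradients"
      then obtain t where t: "l \<in> V" "U t 0 = 0" "\<And>w. w \<in> V \<Longrightarrow> inner l w \<le> U t w"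
        by (auto simp: active_subgradients_def)
      then have "norm l \<le> L"
        using subspace_V by (intro subgradient_norm_le_L[of 0 l t]) (auto simp: subspace_0)
      then have "(t, l) \<in> Z"
        using t by (auto simp: Z_def)
      then show "l \<in> snd ` Z"
        by force
    qed
  qed
  ultimately show ?thesis
    by (simp add: compact_continuous_image continuous_on_snd)
qed

(* The index space is only a compact topological space, so the limit s -> 0 is taken by
   projecting these triples, a compact set, onto their first component. *)
definition support_triples :: "'v \<Rightarrow> (real \<times> 't \<times> 'v) set" where
  "support_triples h = {(s, t, l). s \<in> {0..1} \<and> l \<in> V \<inter> cball 0 L \<and> 0 \<le> U t (s *\<^sub>R h) \<and>
    0 \<le> inner l h \<and> (\<forall>w\<in>V. inner l (w - s *\<^sub>R h) \<le> U t w - U t (s *\<^sub>R h))}"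

lemma compact_support_triples: "compact (support_triples h)"
proof -
  have "support_triples h = ({0..1} \<times> UNIV \<times> (V \<inter> cball 0 L)) \<inter>
    ({x. 0 \<le> U (fst (snd x)) (fst x *\<^sub>R h)} \<inter> {x. 0 \<le> inner (snd (snd x)) h} \<inter>
     (\<Inter>w\<in>V. {x. inner (snd (snd x)) (w - fst x *\<^sub>R h) \<le> U (fst (snd x)) w - U (fst (snd x)) (fst x *\<^sub>R h)}))"
    by (auto simp: support_triples_def)
  moreover have "compact ({0..1} \<times> UNIV \<times> (V \<inter> cball 0 L) :: (real \<times> 't \<times> 'v) set)"
    by (intro compact_Times compact_Icc compact_index compact_Int_cball)
  moreover have "closed ({x :: real \<times> 't \<times> 'v. 0 \<le> U (fst (snd x)) (fst x *\<^sub>R h)} \<inter>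
      {x. 0 \<le> inner (snd (snd x)) h} \<inter>
      (\<Inter>w\<in>V. {x. inner (snd (snd x)) (w - fst x *\<^sub>R h) \<le> U (fst (snd x)) w - U (fst (snd x)) (fst x *\<^sub>R h)}))"
    by (intro closed_Int closed_INT ballI closed_Collect_le continuous_intros)
  ultimately show ?thesis
    by (simp add: compact_Int_closed)
qed

context
  assumes nonpos: "\<And>t. U t 0 \<le> 0" and attained: "\<And>v. v \<in> V \<Longrightarrow> \<exists>t. 0 \<le> U t v"
begin

lemma support_triples_exist:
  assumes "h \<in> V" "0 < s" "s \<le> 1"
  shows "s \<in> fst ` support_triples h"
proof -
  have sh: "s *\<^sub>R h \<in> V"
    using assms(1) subspace_V by (simp add: subspace_scale)
  obtain t where t: "0 \<le> U t (s *\<^sub>R h)"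
    using attained[OF sh] by blast
  obtain l where l: "l \<in> V" "\<And>w. w \<in> V \<Longrightarrow> inner l (w - s *\<^sub>R h) \<le> U t w - U t (s *\<^sub>R h)"
    by (rule subgradient_exists[OF convex_U sh]) blast
  \<comment> \<open>the subgradient inequality at \<open>w = 0\<close>, where \<open>U t 0 \<le> 0 \<le> U t (s h)\<close>\<close>
  have "- s * inner l h \<le> 0"
    using l(2)[of 0] subspace_V t nonpos[of t] by (simp add: subspace_0)
  then have "0 \<le> inner l h"
    using assms(2) by (simp add: zero_le_mult_iff)
  moreover have "norm l \<le> L"
    using sh l by (rule subgradient_norm_le_L)
  ultimately have "(s, t, l) \<in> support_triples h"
    using assms t l by (auto simp: support_triples_def)
  then show ?thesis
    by force
qed

lemma active_subgradient_in_direction: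
  assumes "h \<in> V"
  obtains l where "l \<in> active_subgradients" "0 \<le> inner l h"
proof -
  have "closed (fst ` support_triples h)"
    by (intro compact_imp_closed compact_continuous_image continuous_on_fst continuous_on_id
        compact_support_triples)
  moreover have "{0<..1} \<subseteq> fst ` support_triples h"
    using support_triples_exist[OF assms] by auto
  ultimately have "closure {0<..1} \<subseteq> fst ` support_triples h"
    by (intro closure_minimal)
  then have "0 \<in> fst ` support_triples h"
    by auto
  then obtain t l where "(0, t, l) \<in> support_triples h"
    by (auto simp: image_iff)
  then have "l \<in> active_subgradients" "0 \<le> inner l h"
    using nonpos[of t] by (auto simp: support_triples_def active_subgradients_def)
  then show ?thesis
    by (rule that)
qed

lemma zero_in_convex_hull_active_subgradients: "0 \<in> convex hull active_subgradients"
proof (rule ccontr)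
  assume "0 \<notin> convex hull active_subgradients"
  moreover have "active_subgradients \<subseteq> V"
    by (auto simp: active_subgradients_def)
  ultimately obtain h where h: "h \<in> V" "\<And>l. l \<in> active_subgradients \<Longrightarrow> inner l h < 0"
    by (metis separating_direction compact_active_subgradients)
  then show False
    using active_subgradient_in_direction[OF h(1)] by (metis not_less)
qed

end

theorem minimax_certificate:
  assumes "\<And>t. U t 0 \<le> 0" and "\<And>v. v \<in> V \<Longrightarrow> \<exists>t. 0 \<le> U t v"
  obtains k lam ts where "1 \<le> k" "k \<le> n + 1" "\<And>i. i < k \<Longrightarrow> 0 < lam i" "(\<Sum>i<k. lam i) = 1"
    "\<And>i. i < k \<Longrightarrow> U (ts i) 0 = 0" "\<And>v. v \<in> V \<Longrightarrow> 0 \<le> (\<Sum>i<k. lam i * U (ts i) v)"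
proof -
  have "0 \<in> convex_combs active_subgradients n"
    using zero_in_convex_hull_active_subgradients[OF assms] convex_hull_eq_convex_combs
    by (simp add: active_subgradients_def)
  then obtain k lam l where rep: "1 \<le> k" "k \<le> n + 1" "\<forall>i<k. 0 < lam i \<and> l i \<in> active_subgradients"
    "(\<Sum>i<k. lam i) = 1" "0 = (\<Sum>i<k. lam i *\<^sub>R l i)"
    using convex_combs_representation by blast
  then have "\<forall>i\<in>{..<k}. \<exists>t. U t 0 = 0 \<and> (\<forall>w\<in>V. inner (l i) w \<le> U t w)"
    by (simp add: active_subgradients_def)
  then obtain ts where ts: "\<forall>i\<in>{..<k}. U (ts i) 0 = 0 \<and> (\<forall>w\<in>V. inner (l i) w \<le> U (ts i) w)"
    by (rule bchoice[THEN exE])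
  have "0 \<le> (\<Sum>i<k. lam i * U (ts i) v)" if "v \<in> V" for v
  proof -
    have "0 = inner (\<Sum>i<k. lam i *\<^sub>R l i) v"
      using rep(5) by simp
    also have "\<dots> = (\<Sum>i<k. lam i * inner (l i) v)"
      by (simp add: inner_sum_left)
    also have "\<dots> \<le> (\<Sum>i<k. lam i * U (ts i) v)"
      using rep(3) ts that by (intro sum_mono mult_left_mono) auto
    finally show ?thesis .
  qed
  then show ?thesis
    using rep ts by (intro that[of k lam ts]) auto
qed

end

lemma continuous_on_bcontfun_eval:
  fixes F :: "'a::t2_space \<Rightarrow> ('x::t2_space \<Rightarrow>\<^sub>C 'y::metric_space)"
  assumes "continuous_on UNIV F"
  shows "continuous_on UNIV (\<lambda>p. apply_bcontfun (F (fst p)) (snd p))"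
proof -
  have "isCont (\<lambda>q. apply_bcontfun (F (fst q)) (snd q)) (a0, x0)" for a0 x0
  proof -
    define B where "B q = dist (F (fst q)) (F a0) + dist (F a0 (snd q)) (F a0 x0)" for q :: "'a \<times> 'x"
    have "continuous_on UNIV (\<lambda>q::'a \<times> 'x. F (fst q))"
      by (rule continuous_on_compose2[OF assms continuous_on_fst[OF continuous_on_id]]) simp
    moreover have "continuous_on UNIV (\<lambda>q::'a \<times> 'x. F a0 (snd q))"
      by (rule continuous_on_compose2[OF continuous_on_apply_bcontfun[of UNIV]
          continuous_on_snd[OF continuous_on_id]]) simp
    ultimately have "continuous_on UNIV B"
      unfolding B_def by (intro continuous_intros)
    then have "(B \<longlongrightarrow> B (a0, x0)) (at (a0, x0))"
      using continuous_on_eq_continuous_at[of UNIV B] by (simp add: isCont_def)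
    then have B0: "(B \<longlongrightarrow> 0) (at (a0, x0))"
      by (simp add: B_def)
    have bound: "dist (F (fst q) (snd q)) (F a0 x0) \<le> B q" for q
      unfolding B_def using dist_triangle[of "F (fst q) (snd q)" "F a0 x0" "F a0 (snd q)"]
        dist_bounded[of "F (fst q)" "snd q" "F a0"] by linarith
    show ?thesis
      unfolding isCont_def fst_conv snd_conv
      by (rule tendsto_dist_iff[THEN iffD2], rule tendsto_sandwich[OF _ _ tendsto_const B0])
        (simp_all add: bound)
  qed
  then show ?thesis
    by (intro continuous_at_imp_continuous_on) auto
qed

lemma compact_continuous_SUP:
  fixes \<phi> :: "'a::topological_space \<Rightarrow> real"
  assumes "compact (UNIV :: 'a set)" "continuous_on UNIV \<phi>"
  shows "\<phi> b \<le> (SUP a. \<phi> a)" "\<exists>a. \<phi> a = (SUP a. \<phi> a)"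
proof -
  obtain a where a: "\<And>b. \<phi> b \<le> \<phi> a"
    using continuous_attains_sup[OF assms(1) _ assms(2)] by auto
  then have "(SUP a. \<phi> a) = \<phi> a"
    by (intro cSup_eq_maximum) auto
  then show "\<phi> b \<le> (SUP a. \<phi> a)" "\<exists>a. \<phi> a = (SUP a. \<phi> a)"
    using a by auto
qed

lemma norm_le_SUP_norm:
  fixes f :: "'a::topological_space \<Rightarrow> 'v::real_normed_vector"
  assumes "compact (UNIV :: 'a set)" "continuous_on UNIV f"
  shows "norm (f b - g) \<le> (SUP a. norm (f a - g))"
  using assms(1) by (rule compact_continuous_SUP) (intro continuous_intros assms(2))

lemma norm_bcontfun_attained:
  fixes g :: "'x::topological_space \<Rightarrow>\<^sub>C 'y::real_normed_vector"
  assumes "compact (UNIV :: 'x set)"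
  obtains x where "norm (apply_bcontfun g x) = norm g"
proof -
  obtain x where x: "\<And>y. norm (apply_bcontfun g y) \<le> norm (apply_bcontfun g x)"
    using continuous_attains_sup[OF assms _ continuous_on_norm[OF continuous_on_apply_bcontfun]] by auto
  then have "norm g \<le> norm (apply_bcontfun g x)"
    by (rule norm_bound)
  then show ?thesis
    using norm_bounded[of g x] that by force
qed

lemma norm_apply_le_SUP:
  fixes f :: "'a::topological_space \<Rightarrow> ('x::topological_space \<Rightarrow>\<^sub>C 'y::real_normed_vector)"
    and g :: "'x \<Rightarrow>\<^sub>C 'y"
  assumes "compact (UNIV :: 'a set)" "continuous_on UNIV f"
  shows "norm (f a x - g x) \<le> (SUP a. norm (f a - g))"
  using norm_bounded[of "f a - g" x] norm_le_SUP_norm[OF assms, of a g] by simp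

lemma norm_apply_eq_SUP_squeeze:
  fixes f :: "'a::topological_space \<Rightarrow> ('x::topological_space \<Rightarrow>\<^sub>C 'y::real_normed_vector)"
    and g :: "'x \<Rightarrow>\<^sub>C 'y"
  assumes "compact (UNIV :: 'a set)" "continuous_on UNIV f"
    and "norm (f a x - g x) = (SUP a. norm (f a - g))"
  shows "norm (f a x - g x) = norm (f a - g) \<and> norm (f a - g) = (SUP a. norm (f a - g))"
proof -
  have "norm (f a x - g x) \<le> norm (f a - g)"
    using norm_bounded[of "f a - g" x] by simp
  moreover have "norm (f a - g) \<le> (SUP a. norm (f a - g))"
    using assms(1,2) by (rule norm_le_SUP_norm)
  ultimately show ?thesis
    using assms(3) by linarith
qed

lemma SUP_norm_attained:
  fixes f :: "'a::topological_space \<Rightarrow> ('x::topological_space \<Rightarrow>\<^sub>C 'y::real_normed_vector)"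
    and g :: "'x \<Rightarrow>\<^sub>C 'y"
  assumes "compact (UNIV :: 'x set)" "compact (UNIV :: 'a set)" "continuous_on UNIV f"
  obtains a x where "norm (f a x - g x) = (SUP a. norm (f a - g))"
proof -
  have "continuous_on UNIV (\<lambda>a. norm (f a - g))"
    by (intro continuous_intros assms(3))
  then obtain a where a: "norm (f a - g) = (SUP a. norm (f a - g))"
    using compact_continuous_SUP(2)[OF assms(2)] by blast
  obtain x where "norm ((f a - g) x) = norm (f a - g)"
    using assms(1) by (rule norm_bcontfun_attained) blast
  then show ?thesis
    using that[of a x] a by simp
qed

lemma subspace_coordinates:
  fixes H :: "'a::real_vector set"
  assumes "subspace H" "dim H = n" "1 \<le> n"
  obtains b where "\<And>j. j < n \<Longrightarrow> b j \<in> H" "\<And>g. g \<in> H \<Longrightarrow> \<exists>c. g = (\<Sum>j<n. c j *\<^sub>R b j)"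
proof -
  obtain B where B: "B \<subseteq> H" "H \<subseteq> span B" "card B = n"
    using assms(2) by (rule_tac basis_exists[of H]) auto
  then have "finite B"
    using assms(3) card.infinite by fastforce
  then obtain b where b: "bij_betw b {..<n} B"
    using ex_bij_betw_nat_finite B(3) by (auto simp: atLeast0LessThan)
  have "\<exists>c. g = (\<Sum>j<n. c j *\<^sub>R b j)" if g: "g \<in> H" for g
  proof -
    obtain u where "g = (\<Sum>y\<in>B. u y *\<^sub>R y)"
      using g B(2) span_finite[OF \<open>finite B\<close>] by auto
    also have "\<dots> = (\<Sum>j<n. u (b j) *\<^sub>R b j)"
      using sum.reindex_bij_betw[OF b, of "\<lambda>y. u y *\<^sub>R y"] by simp
    finally show ?thesis
      by (rule exI[of _ "u \<circ> b", unfolded comp_def])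
  qed
  moreover have "b j \<in> H" if "j < n" for j
    using b B(1) that by (auto simp: bij_betw_def)
  ultimately show ?thesis
    by (rule that[rotated])
qed

lemma linear_coord_combination: "linear (\<lambda>v. \<Sum>j<n. coord v j *\<^sub>R y j)"
  by (rule linearI) (simp_all add: scaleR_add_left sum.distrib scaleR_sum_right)

lemma norm_coord_combination_le: "norm (\<Sum>j<n. coord v j *\<^sub>R y j) \<le> (\<Sum>j<n. norm (y j)) * norm v"
proof -
  have "norm (\<Sum>j<n. coord v j *\<^sub>R y j) \<le> (\<Sum>j<n. \<bar>coord v j\<bar> * norm (y j))"
    by (rule norm_sum[THEN order_trans]) simp
  also have "\<dots> \<le> (\<Sum>j<n. norm v * norm (y j))"
    by (intro sum_mono mult_right_mono abs_coord_le_norm) simp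
  finally show ?thesis
    by (simp add: sum_distrib_left mult.commute)
qed

lemma convex_on_norm_minus_linear:
  assumes "linear L" "convex S"
  shows "convex_on S (\<lambda>v. norm (c - L v))"
proof (rule convex_onI[OF _ assms(2)])
  fix t :: real and v w assume t: "0 < t" "t < 1"
  have "L ((1 - t) *\<^sub>R v + t *\<^sub>R w) = (1 - t) *\<^sub>R L v + t *\<^sub>R L w"
    by (simp add: linear_add[OF assms(1)] linear_scale[OF assms(1)])
  then have "c - L ((1 - t) *\<^sub>R v + t *\<^sub>R w) = (1 - t) *\<^sub>R (c - L v) + t *\<^sub>R (c - L w)"
    by (simp add: algebra_simps)
  also have "norm \<dots> \<le> (1 - t) * norm (c - L v) + t * norm (c - L w)"
    using t by (intro norm_triangle_le) (simp add: abs_of_pos)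
  finally show "norm (c - L ((1 - t) *\<^sub>R v + t *\<^sub>R w)) \<le> (1 - t) * norm (c - L v) + t * norm (c - L w)" .
qed

lemma apply_bcontfun_sum: "apply_bcontfun (sum g A) x = (\<Sum>a\<in>A. apply_bcontfun (g a) x)"
  by (induction A rule: infinite_finite_induct) auto

lemma convex_minimax_pointwise_error:
  fixes f :: "'a::t2_space \<Rightarrow> ('x::t2_space \<Rightarrow>\<^sub>C 'y::real_normed_vector)"
    and fs :: "'x \<Rightarrow>\<^sub>C 'y" and b :: "nat \<Rightarrow> ('x \<Rightarrow>\<^sub>C 'y)"
  assumes "compact (UNIV :: 'a set)" "compact (UNIV :: 'x set)" "continuous_on UNIV f"
  shows "convex_minimax (coord_space n) n
    (\<lambda>t v. norm (f (fst t) (snd t) - fs (snd t) - (\<Sum>j<n. coord v j *\<^sub>R b j (snd t))) - E)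
    (\<Sum>j<n. norm (b j))"
proof
  let ?c = "\<lambda>t. f (fst t) (snd t) - fs (snd t)"
  let ?L = "\<lambda>t v. \<Sum>j<n. coord v j *\<^sub>R b j (snd t)"
  show "subspace (coord_space n)"
    by (rule subspace_coord_space)
  show "card B \<le> n" if "B \<subseteq> coord_space n" "independent B" for B
    using that by (rule card_independent_coord_space)
  show "compact (coord_space n \<inter> cball 0 r)" for r
    by (rule compact_coord_space_cball)
  show "compact (UNIV :: ('a \<times> 'x) set)"
    using compact_Times[OF assms(1,2)] by simp
  have "continuous_on UNIV (\<lambda>p :: ('a \<times> 'x) \<times> finseq. f (fst (fst p)) (snd (fst p)))"
    using continuous_on_compose2[OF continuous_on_bcontfun_eval[OF assms(3)] continuous_on_fst[OF continuous_on_id]]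
    by simp
  moreover have "continuous_on UNIV (\<lambda>p :: ('a \<times> 'x) \<times> finseq. h (snd (fst p)))" for h :: "'x \<Rightarrow>\<^sub>C 'y"
    by (rule continuous_on_compose2[OF continuous_on_apply_bcontfun[of UNIV]]) (auto intro!: continuous_intros)
  ultimately show "continuous_on UNIV (\<lambda>(t, v). norm (?c t - ?L t v) - E)"
    unfolding case_prod_unfold by (intro continuous_intros)
  show "convex_on (coord_space n) (\<lambda>v. norm (?c t - ?L t v) - E)" for t
    by (intro convex_on_diff convex_on_norm_minus_linear linear_coord_combination)
      (simp_all add: concave_on_const subspace_imp_convex subspace_coord_space)
  show "norm (?c t - ?L t w) - E - (norm (?c t - ?L t v) - E) \<le> (\<Sum>j<n. norm (b j)) * norm (w - v)" for t v w
  proof -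
    have "norm (?c t - ?L t w) - norm (?c t - ?L t v) \<le> norm ((?c t - ?L t w) - (?c t - ?L t v))"
      by (rule norm_triangle_ineq2)
    also have "\<dots> = norm (?L t (w - v))"
      by (simp add: scaleR_diff_left sum_subtractf norm_minus_commute)
    also have "\<dots> \<le> (\<Sum>j<n. norm (b j (snd t))) * norm (w - v)"
      by (rule norm_coord_combination_le)
    also have "\<dots> \<le> (\<Sum>j<n. norm (b j)) * norm (w - v)"
      by (intro mult_right_mono sum_mono norm_bounded) simp_all
    finally show ?thesis
      by simp
  qed
  show "0 \<le> (\<Sum>j<n. norm (b j))"
    by (simp add: sum_nonneg)
qed

lemma best_simultaneous_approximation_sufficient:
  fixes f :: "'a::t2_space \<Rightarrow> ('x::t2_space \<Rightarrow>\<^sub>C 'y::real_normed_vector)" and fs g :: "'x \<Rightarrow>\<^sub>C 'y"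
  assumes A_compact: "compact (UNIV :: 'a set)" and f_cont: "continuous_on UNIV f"
    and lam: "\<And>i. i < k \<Longrightarrow> 0 \<le> lam i" "(\<Sum>i<k. lam i) = 1"
    and weighted: "(\<Sum>i<k. lam i * norm (f (as i) (xs i) - fs (xs i)))
      \<le> (\<Sum>i<k. lam i * norm (f (as i) (xs i) - g (xs i)))"
    and extremal: "\<And>i. i < k \<Longrightarrow> norm (f (as i) (xs i) - fs (xs i)) = (SUP a. norm (f a - fs))"
  shows "(SUP a. norm (f a - fs)) \<le> (SUP a. norm (f a - g))"
proof -
  have "(SUP a. norm (f a - fs)) = (\<Sum>i<k. lam i * (SUP a. norm (f a - fs)))"
    using lam(2) by (simp add: sum_distrib_right[symmetric])
  also have "\<dots> = (\<Sum>i<k. lam i * norm (f (as i) (xs i) - fs (xs i)))"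
    using extremal by simp
  also have "\<dots> \<le> (\<Sum>i<k. lam i * norm (f (as i) (xs i) - g (xs i)))"
    by (rule weighted)
  also have "\<dots> \<le> (\<Sum>i<k. lam i * (SUP a. norm (f a - g)))"
  proof (intro sum_mono mult_left_mono)
    fix i assume "i \<in> {..<k}"
    show "norm (f (as i) (xs i) - g (xs i)) \<le> (SUP a. norm (f a - g))"
      using A_compact f_cont by (rule norm_apply_le_SUP)
    show "0 \<le> lam i"
      using lam(1) \<open>i \<in> {..<k}\<close> by simp
  qed
  also have "\<dots> = (SUP a. norm (f a - g))"
    using lam(2) by (simp add: sum_distrib_right[symmetric])
  finally show ?thesis .
qed

lemma coord_space_parametrization:
  assumes "subspace H" "fs \<in> H" "g \<in> H" "\<And>g. g \<in> H \<Longrightarrow> \<exists>c. g = (\<Sum>j<n. c j *\<^sub>R b j)"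
  obtains v where "v \<in> coord_space n" "g = fs + (\<Sum>j<n. coord v j *\<^sub>R b j)"
proof -
  obtain c where "g - fs = (\<Sum>j<n. c j *\<^sub>R b j)"
    using assms(4) subspace_diff[OF assms(1,3,2)] by blast
  moreover obtain v where v: "v \<in> coord_space n" "\<forall>j<n. coord v j = c j"
    using coord_space_exists by blast
  ultimately have "g = fs + (\<Sum>j<n. coord v j *\<^sub>R b j)"
    by (simp add: algebra_simps)
  then show ?thesis
    by (rule that[OF v(1)])
qed

lemma best_simultaneous_approximation_necessary:
  fixes H :: "('x::t2_space \<Rightarrow>\<^sub>C 'y::real_normed_vector) set"
    and f :: "'a::t2_space \<Rightarrow> ('x \<Rightarrow>\<^sub>C 'y)" and fs :: "'x \<Rightarrow>\<^sub>C 'y"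
  assumes X_compact: "compact (UNIV :: 'x set)" and A_compact: "compact (UNIV :: 'a set)"
    and H: "subspace H" "dim H = n" "1 \<le> n"
    and f_cont: "continuous_on UNIV f" and fs_H: "fs \<in> H"
    and best: "\<And>g. g \<in> H \<Longrightarrow> (SUP a. norm (f a - fs)) \<le> (SUP a. norm (f a - g))"
  obtains k as xs lam where "1 \<le> k" "k \<le> n + 1" "\<And>i. i < k \<Longrightarrow> 0 < lam i" "(\<Sum>i<k. lam i) = 1"
    "\<And>g. g \<in> H \<Longrightarrow> (\<Sum>i<k. lam i * norm (f (as i) (xs i) - fs (xs i)))
      \<le> (\<Sum>i<k. lam i * norm (f (as i) (xs i) - g (xs i)))"
    "\<And>i. i < k \<Longrightarrow> norm (f (as i) (xs i) - fs (xs i)) = norm (f (as i) - fs) \<and>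
      norm (f (as i) - fs) = (SUP a. norm (f a - fs))"
proof -
  define E where "E = (SUP a. norm (f a - fs))"
  obtain b where b: "\<And>j. j < n \<Longrightarrow> b j \<in> H" "\<And>g. g \<in> H \<Longrightarrow> \<exists>c. g = (\<Sum>j<n. c j *\<^sub>R b j)"
    using H by (rule subspace_coordinates) blast
  define U where "U t v = norm (f (fst t) (snd t) - fs (snd t) - (\<Sum>j<n. coord v j *\<^sub>R b j (snd t))) - E"
    for t :: "'a \<times> 'x" and v
  interpret convex_minimax "coord_space n" n U "\<Sum>j<n. norm (b j)"
    unfolding U_def using A_compact X_compact f_cont by (rule convex_minimax_pointwise_error)
  have U_eq: "U t v = norm (f (fst t) (snd t) - g (snd t)) - E"
    if "g = fs + (\<Sum>j<n. coord v j *\<^sub>R b j)" for t v g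
    by (simp add: U_def that apply_bcontfun_sum algebra_simps)
  have nonpos: "U t 0 \<le> 0" for t
    using norm_apply_le_SUP[OF A_compact f_cont] by (simp add: U_def E_def)
  have attained: "\<exists>t. 0 \<le> U t v" if "v \<in> coord_space n" for v
  proof -
    define g where "g = fs + (\<Sum>j<n. coord v j *\<^sub>R b j)"
    have "g \<in> H"
      unfolding g_def using H(1) fs_H b(1) by (intro subspace_add subspace_sum subspace_scale) auto
    obtain a x where "norm (f a x - g x) = (SUP a. norm (f a - g))"
      using X_compact A_compact f_cont by (rule SUP_norm_attained) blast
    then have "E \<le> norm (f a x - g x)"
      using best[OF \<open>g \<in> H\<close>] by (simp add: E_def)
    then show ?thesis
      using U_eq[OF g_def, of "(a, x)"] by (intro exI[of _ "(a, x)"]) simp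
  qed
  obtain k lam ts where cert: "1 \<le> k" "k \<le> n + 1" "\<And>i. i < k \<Longrightarrow> 0 < lam i"
    "(\<Sum>i<k. lam i) = 1" "\<And>i. i < k \<Longrightarrow> U (ts i) 0 = 0"
    "\<And>v. v \<in> coord_space n \<Longrightarrow> 0 \<le> (\<Sum>i<k. lam i * U (ts i) v)"
    using nonpos attained by (rule minimax_certificate) blast+
  define as where "as i = fst (ts i)" for i
  define xs where "xs i = snd (ts i)" for i
  have extremal: "norm (f (as i) (xs i) - fs (xs i)) = E" if "i < k" for i
    using cert(5)[OF that] by (simp add: U_def as_def xs_def)
  have weighted: "(\<Sum>i<k. lam i * norm (f (as i) (xs i) - fs (xs i)))
      \<le> (\<Sum>i<k. lam i * norm (f (as i) (xs i) - g (xs i)))" if g: "g \<in> H" for g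
  proof -
    obtain v where "v \<in> coord_space n" "g = fs + (\<Sum>j<n. coord v j *\<^sub>R b j)"
      using H(1) fs_H g b(2) by (rule coord_space_parametrization) blast
    then have "0 \<le> (\<Sum>i<k. lam i * (norm (f (as i) (xs i) - g (xs i)) - E))"
      using cert(6)[OF \<open>v \<in> coord_space n\<close>] U_eq[OF \<open>g = _\<close>] by (simp add: as_def xs_def)
    also have "\<dots> = (\<Sum>i<k. lam i * norm (f (as i) (xs i) - g (xs i))) - (\<Sum>i<k. lam i * norm (f (as i) (xs i) - fs (xs i)))"
      using extremal by (simp add: right_diff_distrib sum_subtractf)
    finally show ?thesis
      by simp
  qed
  have squeezed: "norm (f (as i) (xs i) - fs (xs i)) = norm (f (as i) - fs) \<and>
    norm (f (as i) - fs) = (SUP a. norm (f a - fs))" if "i < k" for i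
    using A_compact f_cont extremal[OF that, unfolded E_def] by (rule norm_apply_eq_SUP_squeeze)
  show ?thesis
    by (rule that[OF cert(1-4) weighted squeezed])
qed

theorem theorem2:
  fixes H :: "('x::t2_space \<Rightarrow>\<^sub>C 'y::real_normed_vector) set"
    and f :: "'a::t2_space \<Rightarrow> ('x \<Rightarrow>\<^sub>C 'y)"
    and fs :: "'x \<Rightarrow>\<^sub>C 'y"
    and n :: nat
  assumes X_compact: "compact (UNIV :: 'x set)"
    and A_compact: "compact (UNIV :: 'a set)"
    and H_subspace: "subspace H"
    and H_dim: "dim H = n"
    and n_pos: "n \<ge> 1"
    and f_cont: "continuous_on UNIV f"
    and fs_H: "fs \<in> H"
  shows "(\<forall>g\<in>H. (SUP a. norm (f a - fs)) \<le> (SUP a. norm (f a - g)))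
    \<longleftrightarrow>
    (\<exists>k::nat. 1 \<le> k \<and> k \<le> n + 1 \<and>
      (\<exists>(as :: nat \<Rightarrow> 'a) (xs :: nat \<Rightarrow> 'x) (lam :: nat \<Rightarrow> real).
        (\<forall>i<k. lam i > 0) \<and> (\<Sum>i<k. lam i) = 1 \<and>
        (\<forall>g\<in>H. (\<Sum>i<k. lam i * norm (f (as i) (xs i) - fs (xs i)))
                \<le> (\<Sum>i<k. lam i * norm (f (as i) (xs i) - g (xs i)))) \<and>
        (\<forall>i<k. norm (f (as i) (xs i) - fs (xs i)) = norm (f (as i) - fs) \<and>
               norm (f (as i) - fs) = (SUP a. norm (f a - fs)))))"
    (is "?best \<longleftrightarrow> ?certificate")
proof
  assume ?best
  obtain k as xs lam where cert: "1 \<le> k" "k \<le> n + 1" "\<And>i. i < k \<Longrightarrow> 0 < lam i"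
    "(\<Sum>i<k. lam i) = 1"
    "\<And>g. g \<in> H \<Longrightarrow> (\<Sum>i<k. lam i * norm (f (as i) (xs i) - fs (xs i)))
      \<le> (\<Sum>i<k. lam i * norm (f (as i) (xs i) - g (xs i)))"
    "\<And>i. i < k \<Longrightarrow> norm (f (as i) (xs i) - fs (xs i)) = norm (f (as i) - fs) \<and>
      norm (f (as i) - fs) = (SUP a. norm (f a - fs))"
    by (rule best_simultaneous_approximation_necessary[OF X_compact A_compact H_subspace H_dim n_pos f_cont fs_H])
      (use \<open>?best\<close> in blast)+
  show ?certificate
    using cert by (intro exI[of _ k] conjI exI[of _ as] exI[of _ xs] exI[of _ lam]) auto
next
  assume ?certificate
  then show ?best
  proof (elim exE conjE)
    fix k as xs lam
    assume lam: "\<forall>i<k. lam i > 0" "(\<Sum>i<k. lam i) = 1"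
      and weighted: "\<forall>g\<in>H. (\<Sum>i<k. lam i * norm (f (as i) (xs i) - fs (xs i)))
                \<le> (\<Sum>i<k. lam i * norm (f (as i) (xs i) - g (xs i)))"
      and extremal: "\<forall>i<k. norm (f (as i) (xs i) - fs (xs i)) = norm (f (as i) - fs) \<and>
               norm (f (as i) - fs) = (SUP a. norm (f a - fs))"
    show ?best
    proof
      fix g assume "g \<in> H"
      show "(SUP a. norm (f a - fs)) \<le> (SUP a. norm (f a - g))"
        using lam weighted \<open>g \<in> H\<close> extremal
        by (intro best_simultaneous_approximation_sufficient[OF A_compact f_cont, of k lam]) auto
    qed
  qed
qed

end
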